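(* In the setting of the blurring mean-shift iteration with $f$ PDD and fixed positive weights, let $C_1^{(t)}$ be the convex hull of $\{x_1^{(t)},\dots,x_N^{(t)}\}$ and let $C_1=\bigcap_{t\ge 0}C_1^{(t)}$. Then for every vertex (extreme point) $v$ of $C_1$ there exists at least one index $j\in\{1,\dots,N\}$ such that $\lim_{t\to\infty}x_j^{(t)}=v$.
   Context: Setting: $x_1,\dots,x_N\in\mathbb{R}^p$, fixed weights $w_1,\dots,w_N>0$, and $f:\mathbb{R}^p\to[0,1]$ PDD, meaning: $f(u)=1$ iff $u=0$; $f(u)=\varphi(\|u\|)$ for some $\varphi:[0,\infty)\to[0,1]$; $\varphi$ is decreasing (non-increasing). The blurring mean-shift iteration is $x_i^{(0)}=x_i$ and $x_i^{(t+1)}=\frac{\sum_{j=1}^N f(x_i^{(t)}-x_j^{(t)})w_jx_j^{(t)}}{\sum_{j=1}^N f(x_i^{(t)}-x_j^{(t)})w_j}$. The convex hulls $C_1^{(t)}$ are nested decreasing in $t$. *)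

theory Defs
  imports "HOL-Analysis.Analysis"
begin

definition PDD :: "('a::real_normed_vector \<Rightarrow> real) \<Rightarrow> bool" where
  "PDD f \<longleftrightarrow>
     (\<forall>u. f u = 1 \<longleftrightarrow> u = 0) \<and>
     (\<exists>\<phi> :: real \<Rightarrow> real.
        (\<forall>r\<ge>0. 0 \<le> \<phi> r \<and> \<phi> r \<le> 1) \<and>
        (\<forall>r s. 0 \<le> r \<longrightarrow> r \<le> s \<longrightarrow> \<phi> s \<le> \<phi> r) \<and>
        (\<forall>u. f u = \<phi> (norm u)))"

fun bms :: "nat \<Rightarrow> ('a::real_vector \<Rightarrow> real) \<Rightarrow> (nat \<Rightarrow> real) \<Rightarrow> (nat \<Rightarrow> 'a) \<Rightarrow> nat \<Rightarrow> nat \<Rightarrow> 'a" where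
  "bms N f w x 0 i = x i"
| "bms N f w x (Suc t) i =
     (\<Sum>j<N. (f (bms N f w x t i - bms N f w x t j) * w j) *\<^sub>R bms N f w x t j) /\<^sub>R
     (\<Sum>j<N. f (bms N f w x t i - bms N f w x t j) * w j)"

end

theory Submission
  imports Defs
begin

text \<open>
  Let \<open>K\<close> be the intersection of the hulls and \<open>v\<close> an extreme point of \<open>K\<close>. Since \<open>K\<close> is
  compact, a linear functional \<open>u\<close> cuts off a cap \<open>{y. u \<bullet> v - g \<le> u \<bullet> y}\<close> that meets \<open>K\<close>,
  and hence every late enough hull, only within distance \<open>d\<close> of \<open>v\<close>. The height of the
  configuration, the maximum of \<open>u\<close> over the points, is non-increasing and bounded below by
  \<open>u \<bullet> v\<close>, so its decrements tend to \<open>0\<close>. A step lowers the height gap of every point by at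
  least a fixed fraction of the gap of every point it attracts; once the decrements are small this
  forces all points of the cap close to the top, and then no point can enter the cap from outside.
  So the nonempty set of indices in the cap eventually decreases, and some index stays in the cap,
  i.e. within \<open>d\<close> of \<open>v\<close>, for ever. With finitely many indices, letting \<open>d \<rightarrow> 0\<close> yields a
  converging one. If \<open>f\<close> vanishes off \<open>0\<close>, no point ever moves and \<open>v\<close> is an initial point.
\<close>

lemma Inter_decseq_finite_nonempty:
  fixes C :: "nat \<Rightarrow> 'a set"
  assumes "decseq C" and "finite (C 0)" and "\<And>t. C t \<noteq> {}"
  shows "(\<Inter>t. C t) \<noteq> {}"
proof -
  have fin: "finite (C t)" for t
    using assms(1,2) finite_subset[of "C t" "C 0"] by (simp add: decseq_def)
  obtain t0 where t0: "\<And>t. card (C t0) \<le> card (C t)"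
    using ex_has_least_nat[of "\<lambda>_. True" 0 "\<lambda>t. card (C t)"] by blast
  have "C t0 \<subseteq> C t" for t
  proof (cases "t0 \<le> t")
    case True
    then have "C t \<subseteq> C t0" using assms(1) by (simp add: decseqD)
    then have "C t = C t0" by (rule card_seteq[OF fin _ t0])
    then show ?thesis by simp
  next
    case False
    then show ?thesis using assms(1) by (simp add: decseqD)
  qed
  then show ?thesis using assms(3)[of t0] by blast
qed

lemma decseq_compact_eventually_disjoint:
  fixes H :: "nat \<Rightarrow> 'a::heine_borel set"
  assumes "\<And>t. compact (H t)" and "decseq H" and "closed S" and "(\<Inter>t. H t) \<inter> S = {}"
  obtains T where "H T \<inter> S = {}"
proof -
  have "\<not> (\<forall>t. H t \<inter> S \<noteq> {})"
  proof
    assume "\<forall>t. H t \<inter> S \<noteq> {}"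
    then have "\<Inter>(range (\<lambda>t. H t \<inter> S)) \<noteq> {}"
      using assms(1-3) by (intro compact_nest) (auto simp: compact_Int_closed decseq_def, blast)
    with assms(4) show False by blast
  qed
  then show ?thesis using that by blast
qed

lemma extreme_point_small_cap:
  fixes K :: "'a::euclidean_space set"
  assumes "compact K" and "convex K" and "v extreme_point_of K" and "0 < d"
  obtains u g where "0 < g" and "\<And>y. y \<in> K \<Longrightarrow> inner u v - g \<le> inner u y \<Longrightarrow> dist v y < d"
proof -
  define B where "B = K - ball v d"
  have "compact (convex hull B)"
    unfolding B_def using assms(1) by (intro compact_convex_hull compact_diff) auto
  moreover have "v \<notin> convex hull B"
  proof -
    have "convex hull B \<subseteq> K - {v}"
      using extreme_point_of_stillconvex[OF assms(2)] assms(3,4)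
      by (intro hull_minimal) (auto simp: B_def extreme_point_of_def)
    then show ?thesis by blast
  qed
  ultimately obtain u0 b where sep: "inner u0 v < b" "\<And>y. y \<in> convex hull B \<Longrightarrow> b < inner u0 y"
    using separating_hyperplane_closed_point[OF convex_convex_hull compact_imp_closed] by meson
  show ?thesis
  proof (rule that[of "(b - inner u0 v) / 2" "- u0"])
    show "0 < (b - inner u0 v) / 2" using sep(1) by simp
    fix y assume "y \<in> K" and "inner (- u0) v - (b - inner u0 v) / 2 \<le> inner (- u0) y"
    then have "inner u0 y < b" using sep(1) by (simp add: field_simps)
    then have "y \<notin> convex hull B" using sep(2) by fastforce
    with \<open>y \<in> K\<close> show "dist v y < d" using hull_inc[of y B convex] by (auto simp: B_def)
  qed
qed

lemma ex_tendsto_if_approached: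
  fixes X :: "'i \<Rightarrow> nat \<Rightarrow> 'a::metric_space"
  assumes "finite J" and "\<And>d. 0 < d \<Longrightarrow> \<exists>j\<in>J. \<forall>\<^sub>F t in sequentially. dist (X j t) v < d"
  shows "\<exists>j\<in>J. X j \<longlonglongrightarrow> v"
proof (rule ccontr)
  assume "\<not> ?thesis"
  then have "\<forall>j\<in>J. \<exists>E>0. \<not> (\<forall>\<^sub>F t in sequentially. dist (X j t) v < E)"
    by (auto simp: tendsto_iff)
  then obtain E where E: "\<And>j. j \<in> J \<Longrightarrow> 0 < E j \<and> \<not> (\<forall>\<^sub>F t in sequentially. dist (X j t) v < E j)"
    by metis
  have "J \<noteq> {}" using assms(2)[of 1] by auto
  then have "0 < Min (E ` J)" using assms(1) E by (auto simp: Min_gr_iff)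
  then obtain j where j: "j \<in> J" and "\<forall>\<^sub>F t in sequentially. dist (X j t) v < Min (E ` J)"
    using assms(2) by blast
  moreover have "Min (E ` J) \<le> E j" using assms(1) j by simp
  ultimately have "\<forall>\<^sub>F t in sequentially. dist (X j t) v < E j"
    by (auto elim: eventually_mono)
  with E[OF j] show False by blast
qed

locale blurring_mean_shift =
  fixes N :: nat and f :: "'a::euclidean_space \<Rightarrow> real" and w :: "nat \<Rightarrow> real" and x :: "nat \<Rightarrow> 'a"
  assumes kernel_nonneg: "\<And>u. 0 \<le> f u" and kernel_le_one: "\<And>u. f u \<le> 1"
    and kernel_zero: "f 0 = 1" and weight_pos: "\<And>j. j < N \<Longrightarrow> 0 < w j"
begin

abbreviation "X \<equiv> bms N f w x"
abbreviation "hull_at t \<equiv> convex hull (X t ` {..<N})"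
abbreviation "W \<equiv> \<Sum>j<N. w j"

definition normalizer :: "nat \<Rightarrow> nat \<Rightarrow> real" where
  "normalizer t i = (\<Sum>j<N. f (X t i - X t j) * w j)"

definition shift_coeff :: "nat \<Rightarrow> nat \<Rightarrow> nat \<Rightarrow> real" where
  "shift_coeff t i j = f (X t i - X t j) * w j / normalizer t i"

lemma weight_le_normalizer: "i < N \<Longrightarrow> w i \<le> normalizer t i"
  unfolding normalizer_def
  using member_le_sum[of i "{..<N}" "\<lambda>j. f (X t i - X t j) * w j"] kernel_nonneg weight_pos
  by (simp add: kernel_zero less_imp_le)

lemma normalizer_pos: "i < N \<Longrightarrow> 0 < normalizer t i"
  using weight_le_normalizer weight_pos by (meson less_le_trans)

lemma normalizer_le_total_weight: "normalizer t i \<le> W"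
  unfolding normalizer_def
  by (rule sum_mono) (use kernel_le_one kernel_nonneg weight_pos in \<open>auto intro: mult_left_le_one_le less_imp_le\<close>)

lemma bms_Suc_eq_convex_combination: "X (Suc t) i = (\<Sum>j<N. shift_coeff t i j *\<^sub>R X t j)"
  by (simp add: shift_coeff_def normalizer_def scaleR_sum_right divide_inverse_commute)

declare bms.simps(2)[simp del]

lemma shift_coeff_nonneg: "i < N \<Longrightarrow> j < N \<Longrightarrow> 0 \<le> shift_coeff t i j"
  using normalizer_pos[of i t] kernel_nonneg weight_pos[of j] by (simp add: shift_coeff_def)

lemma sum_shift_coeff: "i < N \<Longrightarrow> (\<Sum>j<N. shift_coeff t i j) = 1"
  using normalizer_pos[of i t] by (simp add: shift_coeff_def normalizer_def flip: sum_divide_distrib)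

lemma shift_coeff_ge: "i < N \<Longrightarrow> j < N \<Longrightarrow> f (X t i - X t j) * w j / W \<le> shift_coeff t i j"
  unfolding shift_coeff_def using normalizer_le_total_weight[of t i] normalizer_pos[of i t] kernel_nonneg weight_pos[of j]
  by (intro divide_left_mono) auto

lemma bms_Suc_in_hull_at: "i < N \<Longrightarrow> X (Suc t) i \<in> hull_at t"
  unfolding bms_Suc_eq_convex_combination
  by (rule convex_sum) (auto simp: sum_shift_coeff shift_coeff_nonneg hull_inc)

lemma decseq_hull_at: "decseq hull_at"
  by (rule decseq_SucI, rule hull_minimal) (auto simp: bms_Suc_in_hull_at)

lemma compact_hull_at: "compact (hull_at t)"
  by (simp add: compact_convex_hull finite_imp_compact)

definition height :: "'a \<Rightarrow> nat \<Rightarrow> real" where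
  "height u t = Max ((\<lambda>i. inner u (X t i)) ` {..<N})"

lemma inner_le_height: "i < N \<Longrightarrow> inner u (X t i) \<le> height u t"
  unfolding height_def by (intro Max_ge) auto

lemma height_attained:
  assumes "0 < N"
  shows "\<exists>k<N. inner u (X t k) = height u t"
proof -
  have "height u t \<in> (\<lambda>i. inner u (X t i)) ` {..<N}"
    unfolding height_def using assms by (intro Max_in) auto
  then show ?thesis by auto
qed

lemma hull_at_below_height: "y \<in> hull_at t \<Longrightarrow> inner u y \<le> height u t"
  using hull_minimal[of "X t ` {..<N}" "{y. inner u y \<le> height u t}" convex]
    inner_le_height[of _ u t] convex_halfspace_le[of u "height u t"]
  by blast

lemma height_Suc_le: "0 < N \<Longrightarrow> height u (Suc t) \<le> height u t"
  using height_attained[of u "Suc t"] bms_Suc_in_hull_at hull_at_below_height by metis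

text \<open>The height gap of \<open>i\<close> after a step is a convex combination of the gaps before it;
  the bound keeps only the term of \<open>j\<close>.\<close>

lemma height_gap_pull:
  assumes "i < N" and "j < N"
  shows "f (X t i - X t j) * w j / W * (height u t - inner u (X t j))
    \<le> height u t - inner u (X (Suc t) i)"
proof -
  define \<delta> where "\<delta> k = height u t - inner u (X t k)" for k
  have \<delta>_nonneg: "k < N \<Longrightarrow> 0 \<le> \<delta> k" for k by (simp add: \<delta>_def inner_le_height)
  have "height u t - inner u (X (Suc t) i) = (\<Sum>k<N. shift_coeff t i k * \<delta> k)"
    using sum_shift_coeff[OF assms(1), of t]
    by (simp add: bms_Suc_eq_convex_combination inner_sum_right \<delta>_def right_diff_distrib sum_subtractf
        flip: sum_distrib_right)
  moreover have "shift_coeff t i j * \<delta> j \<le> (\<Sum>k<N. shift_coeff t i k * \<delta> k)"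
    using assms shift_coeff_nonneg \<delta>_nonneg by (intro member_le_sum) auto
  moreover have "f (X t i - X t j) * w j / W * \<delta> j \<le> shift_coeff t i j * \<delta> j"
    using assms by (intro mult_right_mono shift_coeff_ge \<delta>_nonneg)
  ultimately show ?thesis by (simp add: \<delta>_def)
qed

lemma height_gap_pull_self:
  "i < N \<Longrightarrow> w i / W * (height u t - inner u (X t i)) \<le> height u t - inner u (X (Suc t) i)"
  using height_gap_pull[of i i] by (simp add: kernel_zero)

lemma hull_at_eventually_small_cap:
  assumes "v extreme_point_of (\<Inter>t. hull_at t)" and "0 < d"
  obtains u :: 'a and g :: real and T :: nat where "0 < g"
    and "\<And>t y. T \<le> t \<Longrightarrow> y \<in> hull_at t \<Longrightarrow> inner u v - g \<le> inner u y \<Longrightarrow> dist v y < d"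
proof -
  define K where "K = (\<Inter>t. hull_at t)"
  have "closed K" unfolding K_def using compact_hull_at by (simp add: closed_INT compact_imp_closed)
  then have "compact (hull_at 0 \<inter> K)" by (rule compact_Int_closed[OF compact_hull_at])
  moreover have "hull_at 0 \<inter> K = K" unfolding K_def by (intro Int_absorb1 INT_lower) simp
  ultimately have "compact K" by simp
  moreover have "convex K" unfolding K_def by (simp add: convex_INT)
  moreover have v: "v extreme_point_of K" using assms(1) by (simp add: K_def)
  ultimately obtain u g where "0 < g"
    and cap: "\<And>y. y \<in> K \<Longrightarrow> inner u v - g \<le> inner u y \<Longrightarrow> dist v y < d"
    using extreme_point_small_cap[OF _ _ v assms(2)] by blast
  define S where "S = {y. inner u v - g \<le> inner u y} - ball v d"
  have "closed S" unfolding S_def by (intro closed_Diff closed_halfspace_ge) auto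
  moreover have "K \<inter> S = {}" using cap by (auto simp: S_def dist_commute)
  ultimately obtain T where T: "hull_at T \<inter> S = {}"
    using decseq_compact_eventually_disjoint[OF compact_hull_at decseq_hull_at] by (auto simp: K_def)
  have "dist v y < d" if "T \<le> t" "y \<in> hull_at t" "inner u v - g \<le> inner u y" for t y
  proof -
    have "y \<in> hull_at T" using decseq_hull_at that(1,2) by (auto simp: decseq_def)
    then have "y \<notin> S" using T by blast
    then show ?thesis using that(3) by (simp add: S_def dist_commute)
  qed
  with \<open>0 < g\<close> show ?thesis using that by blast
qed

end

locale blurring_mean_shift_cap = blurring_mean_shift +
  fixes u :: 'a and a g \<kappa> :: real and T0 :: nat
  assumes N_pos: "0 < N" and cap_width_pos: "0 < g" and attraction_pos: "0 < \<kappa>"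
    and height_ge: "\<And>t. a \<le> height u t"
    and cap_attracts: "\<And>t i j. T0 \<le> t \<Longrightarrow> i < N \<Longrightarrow> j < N \<Longrightarrow>
      a - g \<le> inner u (X t i) \<Longrightarrow> a - g \<le> inner u (X t j) \<Longrightarrow> \<kappa> \<le> f (X t i - X t j)"
begin

abbreviation "in_cap t i \<equiv> a - g \<le> inner u (X t i)"

lemma top_in_cap: "inner u (X t k) = height u t \<Longrightarrow> in_cap t k"
  using height_ge[of t] cap_width_pos by simp

lemma attraction_le_one: "\<kappa> \<le> 1"
proof -
  obtain k where "k < N" and "in_cap T0 k" using height_attained[OF N_pos] top_in_cap by blast
  then show ?thesis using cap_attracts[of T0 k k] kernel_le_one[of 0] by simp
qed

lemma total_weight_pos: "0 < W"
  using N_pos weight_pos by (intro sum_pos) auto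

definition rate :: real where
  "rate = \<kappa> * Min (w ` {..<N}) / W"

lemma rate_pos: "0 < rate"
proof -
  have "Min (w ` {..<N}) \<in> w ` {..<N}" using N_pos by (intro Min_in) auto
  then show ?thesis using weight_pos attraction_pos total_weight_pos by (auto simp: rate_def)
qed

lemma rate_le: "j < N \<Longrightarrow> rate \<le> \<kappa> * w j / W"
  unfolding rate_def using attraction_pos total_weight_pos
  by (intro divide_right_mono mult_left_mono Min_le) auto

lemma rate_le_weight:
  assumes "j < N"
  shows "rate \<le> w j / W"
proof -
  have "\<kappa> * w j \<le> w j"
    using attraction_pos attraction_le_one weight_pos[OF assms] by (simp add: mult_left_le_one_le)
  then have "\<kappa> * w j / W \<le> w j / W" using total_weight_pos by (simp add: divide_right_mono)
  then show ?thesis using rate_le[OF assms] by linarith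
qed

lemma rate_le_one: "rate \<le> 1"
proof -
  have "w 0 \<le> W" using N_pos weight_pos by (intro member_le_sum) (auto intro: less_imp_le)
  then have "w 0 / W \<le> 1" using total_weight_pos by simp
  then show ?thesis using rate_le_weight[OF N_pos] by linarith
qed

definition tol :: real where
  "tol = rate * g / 2"

lemma tol_pos: "0 < tol"
  using rate_pos cap_width_pos by (simp add: tol_def)

lemma height_drop_tendsto_zero: "(\<lambda>t. height u t - height u (Suc t)) \<longlonglongrightarrow> 0"
proof -
  have "decseq (height u)" using height_Suc_le[OF N_pos] by (intro decseq_SucI)
  then obtain l where "height u \<longlonglongrightarrow> l" using decseq_convergent height_ge by blast
  then show ?thesis using tendsto_diff[OF _ LIMSEQ_Suc] by fastforce
qed

abbreviation "slow t \<equiv> height u t - height u (Suc t) < rate * tol"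

lemma eventually_slow: "\<forall>\<^sub>F t in sequentially. slow t"
  using order_tendstoD(2)[OF height_drop_tendsto_zero] rate_pos tol_pos by simp

lemma top_pulls_attracted:
  assumes "k < N" and "inner u (X (Suc t) k) = height u (Suc t)"
    and "j < N" and "\<kappa> \<le> f (X t k - X t j)"
  shows "rate * (height u t - inner u (X t j)) \<le> height u t - height u (Suc t)"
proof -
  have "\<kappa> * w j / W \<le> f (X t k - X t j) * w j / W"
    using assms(4) weight_pos[OF assms(3)] total_weight_pos by (intro divide_right_mono mult_right_mono) auto
  then have "rate \<le> f (X t k - X t j) * w j / W" using rate_le[OF assms(3)] by linarith
  then have "rate * (height u t - inner u (X t j))
      \<le> f (X t k - X t j) * w j / W * (height u t - inner u (X t j))"
    using inner_le_height[OF assms(3)] by (intro mult_right_mono) auto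
  also have "\<dots> \<le> height u t - inner u (X (Suc t) k)" by (rule height_gap_pull[OF assms(1,3)])
  finally show ?thesis using assms(2) by simp
qed

lemma cap_near_top:
  assumes "T0 \<le> t" and "slow t" and "j < N" and "in_cap t j"
  shows "height u t - tol \<le> inner u (X t j)"
proof -
  obtain k where k: "k < N" "inner u (X (Suc t) k) = height u (Suc t)"
    using height_attained[OF N_pos] by blast
  have "rate * (height u t - inner u (X t k)) < rate * tol"
    using top_pulls_attracted[OF k k(1)] attraction_le_one assms(2) by (simp add: kernel_zero)
  then have "height u t - tol < inner u (X t k)" using rate_pos by simp
  moreover have "tol < g" using rate_le_one cap_width_pos by (simp add: tol_def)
  ultimately have "in_cap t k" using height_ge[of t] by linarith
  then have "\<kappa> \<le> f (X t k - X t j)" using cap_attracts assms(1,3,4) k(1) by blast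
  then have "rate * (height u t - inner u (X t j)) < rate * tol"
    using top_pulls_attracted[OF k assms(3)] assms(2) by linarith
  then show ?thesis using rate_pos by simp
qed

lemma cap_no_entry:
  assumes "T0 \<le> t" and "slow t" and "slow (Suc t)" and "i < N" and "\<not> in_cap t i"
  shows "\<not> in_cap (Suc t) i"
proof
  assume "in_cap (Suc t) i"
  then have near: "height u (Suc t) - tol \<le> inner u (X (Suc t) i)"
    using cap_near_top assms(1,3,4) by simp
  have "rate * g \<le> w i / W * (height u t - inner u (X t i))"
    using rate_le_weight[OF assms(4)] rate_pos cap_width_pos height_ge[of t] assms(5) by (intro mult_mono) auto
  also have "\<dots> \<le> height u t - inner u (X (Suc t) i)" by (rule height_gap_pull_self[OF assms(4)])
  finally have "tol \<le> height u t - height u (Suc t)" using near by (simp add: tol_def)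
  moreover have "rate * tol \<le> tol" using rate_le_one tol_pos by simp
  ultimately show False using assms(2) by linarith
qed

lemma eventually_in_cap: "\<exists>j<N. \<forall>\<^sub>F t in sequentially. in_cap t j"
proof -
  obtain T1 where T1: "\<And>t. T1 \<le> t \<Longrightarrow> slow t"
    using eventually_slow by (auto simp: eventually_sequentially)
  define T where "T = max T0 T1"
  define C where "C s = {i. i < N \<and> in_cap (T + s) i}" for s
  have "decseq C"
  proof (rule decseq_SucI, rule subsetI)
    fix s i assume "i \<in> C (Suc s)"
    then have i: "i < N" "in_cap (Suc (T + s)) i" by (simp_all add: C_def)
    have "T0 \<le> T + s" and "slow (T + s)" and "slow (Suc (T + s))" using T1 by (simp_all add: T_def)
    then have "in_cap (T + s) i" using cap_no_entry i by blast
    with i(1) show "i \<in> C s" by (simp add: C_def)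
  qed
  moreover have "C s \<noteq> {}" for s
  proof -
    obtain k where "k < N" and "inner u (X (T + s) k) = height u (T + s)"
      using height_attained[OF N_pos] by blast
    then have "k \<in> C s" using top_in_cap by (simp add: C_def)
    then show ?thesis by blast
  qed
  moreover have "finite (C 0)" by (simp add: C_def)
  ultimately obtain j where j: "\<And>s. j \<in> C s"
    using Inter_decseq_finite_nonempty[of C] by blast
  have "in_cap t j" if "T \<le> t" for t
    using j[of "t - T"] that by (simp add: C_def)
  moreover have "j < N" using j[of 0] by (simp add: C_def)
  ultimately show ?thesis by (auto simp: eventually_sequentially)
qed

end

context blurring_mean_shift
begin

lemma extreme_point_attracts_index:
  assumes v: "v extreme_point_of (\<Inter>t. hull_at t)"
    and "0 < r" and "0 < \<kappa>" and attract: "\<And>y. norm y \<le> r \<Longrightarrow> \<kappa> \<le> f y"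
  shows "\<exists>j<N. (\<lambda>t. X t j) \<longlonglongrightarrow> v"
proof -
  have v_in: "v \<in> hull_at t" for t using v by (auto simp: extreme_point_of_def)
  have "0 < N" using v_in[of 0] by (cases N) auto
  have "\<exists>j<N. \<forall>\<^sub>F t in sequentially. dist (X t j) v < d" if "0 < d" for d
  proof -
    have "0 < min d (r / 2)" using \<open>0 < d\<close> \<open>0 < r\<close> by simp
    then obtain u g T where "0 < g" and cap:
      "\<And>t y. T \<le> t \<Longrightarrow> y \<in> hull_at t \<Longrightarrow> inner u v - g \<le> inner u y \<Longrightarrow> dist v y < min d (r / 2)"
      by (rule hull_at_eventually_small_cap[OF v]) blast
    interpret blurring_mean_shift_cap N f w x u "inner u v" g \<kappa> T
    proof (intro blurring_mean_shift_cap.intro blurring_mean_shift_axioms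
        blurring_mean_shift_cap_axioms.intro)
      show "0 < N" and "0 < g" and "0 < \<kappa>" by fact+
      show "inner u v \<le> height u t" for t by (rule hull_at_below_height[OF v_in])
      fix t i j
      assume "T \<le> t" "i < N" "j < N"
        and "inner u v - g \<le> inner u (X t i)" "inner u v - g \<le> inner u (X t j)"
      then have "dist v (X t i) < r / 2" and "dist v (X t j) < r / 2"
        using cap[of t "X t i"] cap[of t "X t j"] by (auto intro: hull_inc)
      then have "dist (X t i) (X t j) \<le> r" using dist_triangle3[of "X t i" "X t j" v] by linarith
      then show "\<kappa> \<le> f (X t i - X t j)" by (intro attract) (simp add: dist_norm)
    qed
    obtain j where "j < N" and "\<forall>\<^sub>F t in sequentially. in_cap t j"
      using eventually_in_cap by blast
    then have "\<forall>\<^sub>F t in sequentially. in_cap t j \<and> T \<le> t"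
      by (intro eventually_conj eventually_ge_at_top)
    then have "\<forall>\<^sub>F t in sequentially. dist (X t j) v < d"
    proof (rule eventually_mono)
      fix t assume "in_cap t j \<and> T \<le> t"
      then have "dist v (X t j) < min d (r / 2)" using cap[of t "X t j"] \<open>j < N\<close> by (simp add: hull_inc)
      then show "dist (X t j) v < d" by (simp add: dist_commute)
    qed
    with \<open>j < N\<close> show ?thesis by blast
  qed
  then have "\<exists>j\<in>{..<N}. (\<lambda>t. X t j) \<longlonglongrightarrow> v"
    by (intro ex_tendsto_if_approached) auto
  then show ?thesis by blast
qed

lemma bms_const_if_kernel_vanishes:
  assumes "\<And>u. u \<noteq> 0 \<Longrightarrow> f u = 0" and "i < N"
  shows "X t i = x i"
  using assms(2)
proof (induction t arbitrary: i)
  case (Suc t)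
  have "shift_coeff t i j *\<^sub>R X t j = shift_coeff t i j *\<^sub>R X t i" for j
    using assms(1)[of "X t i - X t j"] by (cases "X t i = X t j") (auto simp: shift_coeff_def)
  then have "X (Suc t) i = (\<Sum>j<N. shift_coeff t i j *\<^sub>R X t i)"
    unfolding bms_Suc_eq_convex_combination by (intro sum.cong) auto
  then have "X (Suc t) i = (\<Sum>j<N. shift_coeff t i j) *\<^sub>R X t i"
    by (simp add: scaleR_sum_left)
  then show ?case using Suc by (simp add: sum_shift_coeff)
qed simp

lemma extreme_point_attracts_index_if_kernel_vanishes:
  assumes "\<And>u. u \<noteq> 0 \<Longrightarrow> f u = 0" and "v extreme_point_of (\<Inter>t. hull_at t)"
  shows "\<exists>j<N. (\<lambda>t. X t j) \<longlonglongrightarrow> v"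
proof -
  have "hull_at t = convex hull (x ` {..<N})" for t
    using bms_const_if_kernel_vanishes[OF assms(1)] by (metis (mono_tags, lifting) image_cong lessThan_iff)
  then have "v extreme_point_of convex hull (x ` {..<N})" using assms(2) by simp
  then obtain j where "j < N" and "v = x j" using extreme_point_of_convex_hull by blast
  then show ?thesis using bms_const_if_kernel_vanishes[OF assms(1)] by auto
qed

end

lemma PDD_kernel_bounds:
  assumes "PDD f"
  shows "0 \<le> f u" and "f u \<le> 1" and "f 0 = 1"
proof -
  from assms obtain \<phi> :: "real \<Rightarrow> real"
    where f_one: "\<And>u. f u = 1 \<longleftrightarrow> u = 0" and \<phi>_range: "\<forall>r\<ge>0. 0 \<le> \<phi> r \<and> \<phi> r \<le> 1"
      and f_\<phi>: "\<forall>u. f u = \<phi> (norm u)"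
    unfolding PDD_def by (elim conjE exE) blast
  show "0 \<le> f u" and "f u \<le> 1" using \<phi>_range f_\<phi> by simp_all
  show "f 0 = 1" using f_one by simp
qed

lemma PDD_kernel_cases:
  fixes f :: "'a::real_normed_vector \<Rightarrow> real"
  assumes "PDD f"
  obtains r \<kappa> where "0 < r" and "0 < \<kappa>" and "\<And>y. norm y \<le> r \<Longrightarrow> \<kappa> \<le> f y"
  | "\<And>u. u \<noteq> 0 \<Longrightarrow> f u = 0"
proof -
  from assms obtain \<phi> :: "real \<Rightarrow> real"
    where \<phi>_range: "\<forall>r\<ge>0. 0 \<le> \<phi> r \<and> \<phi> r \<le> 1"
      and \<phi>_antimono: "\<forall>r s. 0 \<le> r \<longrightarrow> r \<le> s \<longrightarrow> \<phi> s \<le> \<phi> r"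
      and f_\<phi>: "\<forall>u. f u = \<phi> (norm u)"
    unfolding PDD_def by (elim conjE exE) blast
  show ?thesis
  proof (cases "\<exists>r>0. 0 < \<phi> r")
    case True
    then obtain r where "0 < r" and "0 < \<phi> r" by blast
    moreover have "\<phi> r \<le> f y" if "norm y \<le> r" for y
      using \<phi>_antimono that f_\<phi> by simp
    ultimately show ?thesis by (rule that(1))
  next
    case False
    have "f u = 0" if "u \<noteq> 0" for u
    proof -
      have "\<phi> (norm u) \<le> 0" using False that by (meson not_less zero_less_norm_iff)
      moreover have "0 \<le> \<phi> (norm u)" using \<phi>_range by simp
      ultimately show ?thesis using f_\<phi> by simp
    qed
    then show ?thesis by (rule that(2))
  qed
qed

theorem lemma2:
  fixes N :: nat and x :: "nat \<Rightarrow> 'a::euclidean_space" and w :: "nat \<Rightarrow> real"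
    and f :: "'a \<Rightarrow> real" and v :: 'a
  assumes "PDD f"
    and "\<And>j. j < N \<Longrightarrow> w j > 0"
    and "v extreme_point_of (\<Inter>t. convex hull ((\<lambda>i. bms N f w x t i) ` {..<N}))"
  shows "\<exists>j<N. (\<lambda>t. bms N f w x t j) \<longlonglongrightarrow> v"
proof -
  interpret blurring_mean_shift N f w x
    by unfold_locales (simp_all add: PDD_kernel_bounds[OF assms(1)] assms(2))
  from assms(1) show ?thesis
  proof (cases rule: PDD_kernel_cases)
    case (1 r \<kappa>)
    then show ?thesis by (rule extreme_point_attracts_index[OF assms(3)])
  next
    case 2
    then show ?thesis by (rule extreme_point_attracts_index_if_kernel_vanishes[OF _ assms(3)])
  qed
qed

end
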